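(* Let $N>0$, $m>0$, $w\geq 0$, $\alpha>0$ and let $y,t,L,L_g,g$ be real numbers with $L+L_g>0$. Let $p:[0,N]\to(0,\infty)$ be an integrable function that attains its maximum and its minimum on $[0,N]$, and suppose that for every $i\in[0,N]$ \[ \int_0^N \ln\left[\frac{p(i)}{p(j)}\right]p(j)\,dj + \frac{p(i)-mw}{p(i)}\int_0^N p(j)\,dj = \alpha(y-t) + \frac{\alpha g}{L+L_g}\int_0^N p(j)\,dj . \] Then $p$ is constant on $[0,N]$, i.e. there is $p_0$ with $p(i)=p_0$ for all $i\in[0,N]$.
   Context: This is the first-order condition for profit maximization of firm $i$ in a monopolistic-competition model with a continuum $[0,N]$ of firms, each producing one variety $i$ with labor input $l=F+mq$, nominal wage $w$, consumers with CARA partial utility $u(q)=k-\kappa e^{-\alpha q}$, income $y$, tax $t$, $L$ privately employed and $L_g$ governmentally employed workers, and a government purchase $g(i)=g$ of every variety $i$ (the same for all varieties). *)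

theory Defs
  imports "HOL-Analysis.Analysis"
begin

end

theory Submission
  imports Defs
begin

(* Since ln (p i / p j) = ln (p i) - ln (p j), the first-order condition says that
   P ln (p i) - m w P / p i takes the same value at every i, where P is the total
   integral of p.  This function of p i is strictly increasing, so p is constant. *)

lemma set_integrable_ln_mult:
  fixes f :: "'a \<Rightarrow> real"
  assumes f: "set_integrable M A f" and bounds: "\<forall>x\<in>A. a \<le> f x \<and> f x \<le> b" and "0 < a"
  shows "set_integrable M A (\<lambda>x. ln (f x) * f x)"
proof (rule set_integrable_bound[OF set_integrable_mult_right[OF f, of "\<bar>ln a\<bar> + \<bar>ln b\<bar>"]])
  have "(\<lambda>x. indicator A x *\<^sub>R f x) \<in> borel_measurable M"
    using f unfolding set_integrable_def by (rule borel_measurable_integrable)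
  then have "(\<lambda>x. ln (indicator A x *\<^sub>R f x) * (indicator A x *\<^sub>R f x)) \<in> borel_measurable M"
    by measurable
  \<comment> \<open>the factor ln u * u vanishes at u = 0, so it commutes with the indicator\<close>
  moreover have "(\<lambda>x. ln (indicator A x *\<^sub>R f x) * (indicator A x *\<^sub>R f x))
      = (\<lambda>x. indicator A x *\<^sub>R (ln (f x) * f x))"
    by (auto simp: indicator_def)
  ultimately show "set_borel_measurable M A (\<lambda>x. ln (f x) * f x)"
    unfolding set_borel_measurable_def by simp
  show "AE x in M. x \<in> A \<longrightarrow> norm (ln (f x) * f x) \<le> norm ((\<bar>ln a\<bar> + \<bar>ln b\<bar>) * f x)"
  proof (intro AE_I2 impI)
    fix x assume "x \<in> A"
    with bounds \<open>0 < a\<close> have "0 < f x" "ln a \<le> ln (f x)" "ln (f x) \<le> ln b" by auto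
    then show "norm (ln (f x) * f x) \<le> norm ((\<bar>ln a\<bar> + \<bar>ln b\<bar>) * f x)"
      by (simp add: abs_mult mult_right_mono)
  qed
qed

lemma set_integral_ln_div_mult:
  fixes f :: "'a \<Rightarrow> real"
  assumes "A \<in> sets M" "set_integrable M A f" "set_integrable M A (\<lambda>j. ln (f j) * f j)"
    and "\<forall>j\<in>A. 0 < f j" and "0 < x"
  shows "(LINT j:A|M. ln (x / f j) * f j) = ln x * (LINT j:A|M. f j) - (LINT j:A|M. ln (f j) * f j)"
proof -
  have "(LINT j:A|M. ln (x / f j) * f j) = (LINT j:A|M. ln x * f j - ln (f j) * f j)"
    using assms by (intro set_lebesgue_integral_cong) (auto simp: ln_div algebra_simps)
  also have "\<dots> = ln x * (LINT j:A|M. f j) - (LINT j:A|M. ln (f j) * f j)"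
    using assms by (simp add: set_integral_diff(2) set_integrable_mult_right)
  finally show ?thesis .
qed

lemma set_integral_pos_of_lower_bound:
  fixes f :: "real \<Rightarrow> real"
  assumes "set_integrable lborel {u..v} f" "\<forall>x\<in>{u..v}. a \<le> f x" "0 < a" "u < v"
  shows "0 < (LINT x:{u..v}|lborel. f x)"
proof -
  have "integrable lborel (indicator {u..v} :: real \<Rightarrow> real)"
    using \<open>u < v\<close> by (intro integrable_real_indicator) auto
  then have const: "set_integrable lborel {u..v} (\<lambda>_. a)"
    unfolding set_integrable_def by simp
  have "0 < (v - u) * a"
    using assms by simp
  also have "\<dots> = (LINT x:{u..v}|lborel. a)"
    using \<open>u < v\<close> by (simp add: set_integral_const)
  also have "\<dots> \<le> (LINT x:{u..v}|lborel. f x)"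
    using assms by (intro set_integral_mono[OF const]) auto
  finally show ?thesis .
qed

lemma strict_mono_on_ln_minus_inverse:
  fixes P c :: real
  assumes "0 < P" "0 \<le> c"
  shows "strict_mono_on {0<..} (\<lambda>x. P * ln x - c / x)"
proof (rule strict_mono_onI)
  fix x z :: real assume "x \<in> {0<..}" "x < z"
  then have "P * ln x < P * ln z" "c / z \<le> c / x"
    using assms by (auto intro: divide_left_mono)
  then show "P * ln x - c / x < P * ln z - c / z" by linarith
qed

theorem proposition1:
  fixes N m w \<alpha> y t L Lg g :: real and p :: "real \<Rightarrow> real"
  assumes "N > 0" and "m > 0" and "w \<ge> 0" and "\<alpha> > 0" and "L + Lg > 0"
    and pos: "\<forall>i\<in>{0..N}. p i > 0"
    and integ: "set_integrable lborel {0..N} p"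
    and hasmax: "\<exists>i0\<in>{0..N}. \<forall>i\<in>{0..N}. p i \<le> p i0"
    and hasmin: "\<exists>i0\<in>{0..N}. \<forall>i\<in>{0..N}. p i0 \<le> p i"
    and foc: "\<forall>i\<in>{0..N}.
      (LINT j:{0..N}|lborel. ln (p i / p j) * p j)
        + (p i - m * w) / p i * (LINT j:{0..N}|lborel. p j)
      = \<alpha> * (y - t) + \<alpha> * g / (L + Lg) * (LINT j:{0..N}|lborel. p j)"
  shows "\<exists>p0. \<forall>i\<in>{0..N}. p i = p0"
proof -
  define P where "P = (LINT j:{0..N}|lborel. p j)"
  define E where "E = (LINT j:{0..N}|lborel. ln (p j) * p j)"
  define h where "h x = P * ln x - m * w * P / x" for x
  obtain a b where bounds: "\<forall>j\<in>{0..N}. a \<le> p j \<and> p j \<le> b" and "0 < a"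
    using hasmax hasmin pos by blast
  have "0 < P"
    unfolding P_def using set_integral_pos_of_lower_bound[OF integ] bounds \<open>0 < a\<close> \<open>N > 0\<close> by auto
  have ln_integ: "set_integrable lborel {0..N} (\<lambda>j. ln (p j) * p j)"
    using set_integrable_ln_mult[OF integ bounds \<open>0 < a\<close>] .
  have h_const: "h (p i) = \<alpha> * (y - t) + \<alpha> * g / (L + Lg) * P + E - P" if "i \<in> {0..N}" for i
  proof -
    have "0 < p i" using that pos by blast
    have "(LINT j:{0..N}|lborel. ln (p i / p j) * p j) = ln (p i) * P - E"
      unfolding P_def E_def using that pos by (intro set_integral_ln_div_mult[OF _ integ ln_integ]) auto
    moreover have "(p i - m * w) / p i * P = P - m * w * P / p i"
      using \<open>0 < p i\<close> by (simp add: field_simps)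
    moreover have "(LINT j:{0..N}|lborel. ln (p i / p j) * p j) + (p i - m * w) / p i * P
        = \<alpha> * (y - t) + \<alpha> * g / (L + Lg) * P"
      using foc that unfolding P_def by blast
    ultimately show ?thesis
      unfolding h_def by (simp add: algebra_simps)
  qed
  have h_mono: "strict_mono_on {0<..} h"
    unfolding h_def using strict_mono_on_ln_minus_inverse \<open>0 < P\<close> \<open>m > 0\<close> \<open>w \<ge> 0\<close> by simp
  have "p i = p 0" if "i \<in> {0..N}" for i
  proof (rule strict_mono_on_eqD[OF h_mono])
    show "h (p 0) = h (p i)" using h_const[OF that] h_const[of 0] \<open>N > 0\<close> by simp
    show "p 0 \<in> {0<..}" "p i \<in> {0<..}" using pos that \<open>N > 0\<close> by auto
  qed
  then show ?thesis by blast
qed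

end
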